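(* Let $d\geqslant2$ and let $\mathcal{D}\subseteq\mathbb{Z}^d$ be the set of all vectors $(\epsilon_1n,\dots,\epsilon_dn)$ with $n\in\mathbb{Z}$ and $\epsilon_1,\dots,\epsilon_d\in\{1,-1\}$. Then $\mathcal{D}$ is not eventually periodic (with respect to any choice of periods $u_1,\dots,u_d$). Moreover, for each $1\leqslant i\leqslant d$, the set $\mathcal{H}_i=\{(x_1,\dots,x_d)\in\mathbb{Z}^d:x_i=0\}$ is a minimal complement of $\mathcal{D}$ in $\mathbb{Z}^d$.
   Context: $\mathbb{N}=\{0,1,2,\dots\}$. Given $u_1,\dots,u_d\in\mathbb{Z}^d$ satisfying no nontrivial $\mathbb{Z}$-linear relation and $P=\mathbb{N}u_1+\dots+\mathbb{N}u_d$, a nonempty $X\subseteq\mathbb{Z}^d$ is eventually periodic with periods $u_1,\dots,u_d$ if $X\subseteq F+P$ for some nonempty finite $F\subseteq\mathbb{Z}^d$ and $x+P\subseteq X$ for all but finitely many $x\in X$. A nonempty $M\subseteq\mathbb{Z}^d$ is a complement of $W$ if $M+W=\mathbb{Z}^d$, and a minimal complement if no proper subset of $M$ is a complement of $W$. *)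

theory Defs
  imports "HOL-Analysis.Analysis"
begin

text \<open>Vectors of Z^d are modelled as int^'n, with d = CARD('n).
  A family of d periods is a map u :: 'n => int^'n.\<close>

definition Z_independent :: "('n::finite \<Rightarrow> int^'n) \<Rightarrow> bool" where
  "Z_independent u \<longleftrightarrow>
     (\<forall>c :: 'n \<Rightarrow> int. (\<Sum>i\<in>UNIV. c i *s u i) = 0 \<longrightarrow> (\<forall>i. c i = 0))"

definition period_cone :: "('n::finite \<Rightarrow> int^'n) \<Rightarrow> (int^'n) set" where
  "period_cone u = {\<Sum>i\<in>UNIV. int (k i) *s u i | k :: 'n \<Rightarrow> nat. True}"

definition setsum :: "('a::plus) set \<Rightarrow> 'a set \<Rightarrow> 'a set" where
  "setsum A B = {a + b | a b. a \<in> A \<and> b \<in> B}"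

definition eventually_periodic :: "(int^'n::finite) set \<Rightarrow> ('n \<Rightarrow> int^'n) \<Rightarrow> bool" where
  "eventually_periodic X u \<longleftrightarrow>
     Z_independent u \<and> X \<noteq> {} \<and>
     (\<exists>F. finite F \<and> F \<noteq> {} \<and> X \<subseteq> setsum F (period_cone u)) \<and>
     finite {x \<in> X. \<not> (setsum {x} (period_cone u) \<subseteq> X)}"

definition is_complement :: "(int^'n::finite) set \<Rightarrow> (int^'n) set \<Rightarrow> bool" where
  "is_complement M W \<longleftrightarrow> M \<noteq> {} \<and> setsum M W = UNIV"

definition minimal_complement :: "(int^'n::finite) set \<Rightarrow> (int^'n) set \<Rightarrow> bool" where
  "minimal_complement M W \<longleftrightarrow> is_complement M W \<and> (\<forall>M'. M' \<subset> M \<longrightarrow> \<not> is_complement M' W)"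

definition diagonals :: "(int^'n::finite) set" where
  "diagonals = {x. \<exists>(n::int) (e::'n \<Rightarrow> int). (\<forall>j. e j \<in> {1, -1}) \<and> x = (\<chi> j. e j * n)}"

definition coord_hyperplane :: "'n::finite \<Rightarrow> (int^'n) set" where
  "coord_hyperplane i = {x. x $ i = 0}"

end

theory Submission
  imports Defs
begin

text \<open>Every point of \<open>\<D>\<close> has coordinates of equal absolute value. If \<open>\<D>\<close> were eventually
  periodic, then for some \<open>n \<noteq> 0\<close> both \<open>n(1,\<dots>,1) + u\<^sub>m\<close> and \<open>n(1,\<dots>,1) + 2u\<^sub>m\<close> would lie
  in \<open>\<D>\<close>, which forces every period \<open>u\<^sub>m\<close> to be a constant vector; but two constant vectors are
  \<open>\<int>\<close>-dependent, so there cannot be \<open>d \<ge> 2\<close> independent periods. Minimality of \<open>\<H>\<^sub>i\<close> holds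
  because \<open>\<D> \<inter> \<H>\<^sub>i = {0}\<close>: a point \<open>h \<in> \<H>\<^sub>i\<close> can only be reached as \<open>h + 0\<close>.\<close>

lemma diagonals_abs_eq:
  assumes "y \<in> (diagonals :: (int^'n::finite) set)"
  shows "\<bar>y $ j\<bar> = \<bar>y $ l\<bar>"
proof -
  from assms obtain n and e :: "'n \<Rightarrow> int"
    where e: "\<forall>j. e j \<in> {1, -1}" and y: "y = (\<chi> j. e j * n)"
    unfolding diagonals_def by blast
  have "\<bar>e j * n\<bar> = \<bar>n\<bar>" for j
    using e[rule_format, of j] by (auto simp: abs_mult)
  then show ?thesis using y by simp
qed

lemma const_vec_in_diagonals: "(\<chi> j. n) \<in> (diagonals :: (int^'n::finite) set)"
  unfolding diagonals_def by (intro CollectI exI[of _ n] exI[of _ "\<lambda>_. 1"]) simp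

lemma diagonals_coord_zero:
  assumes "y \<in> (diagonals :: (int^'n::finite) set)" and "y $ i = 0"
  shows "y = 0"
  using diagonals_abs_eq[OF assms(1), of _ i] assms(2) by (simp add: vec_eq_iff)

lemma sum_delta_vector_smult:
  fixes u :: "'n::finite \<Rightarrow> int^'n"
  shows "(\<Sum>i\<in>UNIV. (if i = m then a else 0) *s u i) = a *s u m"
  by (simp add: if_distrib[of "\<lambda>c. c *s _"] cong: if_cong)

lemma vector_smult_mem_period_cone: "int c *s u m \<in> period_cone u"
  unfolding period_cone_def mem_Collect_eq
  using sum_delta_vector_smult[of m "int c" u]
  by (intro exI[of _ "\<lambda>i. if i = m then c else 0"]) (simp add: if_distrib[of int] cong: if_cong)

lemma Z_independent_vector_smult_eq:
  assumes ind: "Z_independent u" and "m1 \<noteq> m2" and eq: "a *s u m1 = b *s u m2"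
  shows "a = 0 \<and> b = 0"
proof -
  define c where "c i = (if i = m1 then a else 0) + (if i = m2 then - b else 0)" for i
  have "(\<Sum>i\<in>UNIV. c i *s u i) = a *s u m1 + (- b) *s u m2"
    unfolding c_def by (simp add: sum.distrib sum_delta_vector_smult)
  also have "\<dots> = 0" using eq by (simp add: vec_eq_iff)
  finally have "c m1 = 0" "c m2 = 0" using ind unfolding Z_independent_def by blast+
  with \<open>m1 \<noteq> m2\<close> show ?thesis unfolding c_def by simp
qed

lemma Z_independent_not_const:
  assumes "Z_independent u" and "m1 \<noteq> m2"
  shows "\<not> ((\<forall>j. u m1 $ j = t1) \<and> (\<forall>j. u m2 $ j = t2))"
proof
  assume const: "(\<forall>j. u m1 $ j = t1) \<and> (\<forall>j. u m2 $ j = t2)"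
  then have "t2 *s u m1 = t1 *s u m2"
    by (simp add: vec_eq_iff mult.commute)
  then have "t1 = 0" using Z_independent_vector_smult_eq[OF assms] by blast
  with const have "1 *s u m1 = (0::int) *s u m2" by (simp add: vec_eq_iff)
  from Z_independent_vector_smult_eq[OF assms this] show False by simp
qed

text \<open>Comparing \<open>|n + v\<^sub>j| = |n + v\<^sub>l|\<close> with \<open>|n + 2v\<^sub>j| = |n + 2v\<^sub>l|\<close> rules out \<open>v\<^sub>j + v\<^sub>l = -n\<close>
  unless \<open>n = 0\<close>.\<close>
lemma const_if_shifts_in_diagonals:
  fixes v :: "int^'n::finite"
  assumes "n \<noteq> 0"
    and "(\<chi> j. n) + v \<in> diagonals" and "(\<chi> j. n) + 2 *s v \<in> diagonals"
  shows "v $ j = v $ l"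
proof -
  have "\<bar>n + v $ j\<bar> = \<bar>n + v $ l\<bar>" "\<bar>n + 2 * v $ j\<bar> = \<bar>n + 2 * v $ l\<bar>"
    using diagonals_abs_eq[OF assms(2), of j l] diagonals_abs_eq[OF assms(3), of j l] by simp_all
  then show ?thesis using \<open>n \<noteq> 0\<close> by (auto simp: abs_eq_iff)
qed

lemma eventually_periodic_const_vec_shift:
  fixes X :: "(int^'n::finite) set"
  assumes "eventually_periodic X u"
  obtains n :: int where "n \<noteq> 0" and "(\<chi> j. n) \<in> X \<longrightarrow> setsum {\<chi> j. n} (period_cone u) \<subseteq> X"
proof -
  let ?B = "{x \<in> X. \<not> setsum {x} (period_cone u) \<subseteq> X}"
  have "inj (\<lambda>n::int. (\<chi> j. n) :: int^'n)"
    by (rule injI) (metis vec_lambda_beta)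
  moreover have "finite ?B" using assms unfolding eventually_periodic_def by blast
  ultimately have "finite (insert 0 ((\<lambda>n::int. (\<chi> j. n) :: int^'n) -` ?B))"
    using finite_vimageI by blast
  then obtain n :: int where "n \<notin> insert 0 ((\<lambda>n::int. (\<chi> j. n) :: int^'n) -` ?B)"
    using ex_new_if_finite[OF infinite_UNIV_int] by blast
  then have "n \<noteq> 0" and "(\<chi> j. n) \<notin> ?B" by simp_all
  then show thesis by (intro that) blast+
qed

lemma diagonals_not_eventually_periodic:
  assumes card: "CARD('n::finite) \<ge> 2"
  shows "\<not> eventually_periodic (diagonals :: (int^'n) set) u"
proof
  assume ep: "eventually_periodic (diagonals :: (int^'n) set) u"
  obtain n :: int where "n \<noteq> 0" and shift: "setsum {\<chi> j. n} (period_cone u) \<subseteq> diagonals"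
    using eventually_periodic_const_vec_shift[OF ep] const_vec_in_diagonals by metis
  have "(\<chi> j. n) + int c *s u m \<in> (diagonals :: (int^'n) set)" for c m
    using shift vector_smult_mem_period_cone[of c u m] unfolding setsum_def by blast
  from this[of 1] this[of 2] have const: "u m $ j = u m $ l" for m j l
    by (intro const_if_shifts_in_diagonals[OF \<open>n \<noteq> 0\<close>]) simp_all
  obtain m1 m2 :: 'n where "m1 \<noteq> m2"
    using card card_le_Suc0_iff_eq[of "UNIV :: 'n set"] by auto
  moreover have "Z_independent u" using ep unfolding eventually_periodic_def by blast
  ultimately show False
    using Z_independent_not_const[of u m1 m2 "u m1 $ m1" "u m2 $ m1"] const by blast
qed

lemma coord_hyperplane_complement:
  "is_complement (coord_hyperplane i) (diagonals :: (int^'n::finite) set)"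
  unfolding is_complement_def
proof (intro conjI)
  have "0 \<in> coord_hyperplane i" unfolding coord_hyperplane_def by simp
  then show "coord_hyperplane i \<noteq> {}" by blast
  have "x \<in> setsum (coord_hyperplane i) diagonals" for x :: "int^'n"
  proof -
    have "x = (x - (\<chi> j. x $ i)) + (\<chi> j. x $ i)" by simp
    moreover have "x - (\<chi> j. x $ i) \<in> coord_hyperplane i"
      unfolding coord_hyperplane_def by simp
    ultimately show ?thesis
      unfolding setsum_def using const_vec_in_diagonals by blast
  qed
  then show "setsum (coord_hyperplane i) diagonals = UNIV" by blast
qed

lemma coord_hyperplane_minimal_complement:
  "minimal_complement (coord_hyperplane i) (diagonals :: (int^'n::finite) set)"
  unfolding minimal_complement_def
proof (intro conjI allI impI coord_hyperplane_complement)
  fix M' assume sub: "M' \<subset> coord_hyperplane i"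
  then obtain h where hH: "h \<in> coord_hyperplane i" and "h \<notin> M'" by blast
  have "h \<notin> setsum M' (diagonals :: (int^'n) set)"
  proof
    assume "h \<in> setsum M' (diagonals :: (int^'n) set)"
    then obtain m y where "m \<in> M'" and y: "y \<in> diagonals" and hmy: "h = m + y"
      unfolding setsum_def by blast
    moreover have "y $ i = 0"
      using \<open>m \<in> M'\<close> sub hH hmy unfolding coord_hyperplane_def by auto
    ultimately show False
      using diagonals_coord_zero[OF y \<open>y $ i = 0\<close>] \<open>h \<notin> M'\<close> by simp
  qed
  then show "\<not> is_complement M' diagonals" unfolding is_complement_def by blast
qed

theorem proposition6p1:
  assumes "CARD('n::finite) \<ge> 2"
  shows "(\<forall>u :: 'n \<Rightarrow> int^'n. Z_independent u \<longrightarrow>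
            \<not> eventually_periodic (diagonals :: (int^'n) set) u) \<and>
         (\<forall>i :: 'n. minimal_complement (coord_hyperplane i) (diagonals :: (int^'n) set))"
  using diagonals_not_eventually_periodic[OF assms] coord_hyperplane_minimal_complement by blast

end
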